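(* Let $n\ge2$, $\epsilon\in[-1,1]$, $h\in[0,1]$. For $0\le p\le 2n$, $$\min_{\sigma\in\mathcal C(p)}H(\sigma)=\begin{cases}n-(p-n)^2-p^2-\epsilon(n-2p)-2h(p-n) & 0\le p\le n,\\ n-(2n-p)^2-(p-n)^2-\epsilon(2p-3n)-2h(p-n) & n\le p\le 2n.\end{cases}$$ Moreover, for $0\le p\le n$ this minimum is attained on $C(p,0,0)$ and on $C(0,p,0)$, and for $n\le p\le 2n$ it is attained on $C(n,p-n,p-n)$ and on $C(p-n,n,p-n)$.
   Context: The graph $\mathcal G(2,n)$ has vertex set $V=V^{(1)}\cup V^{(2)}$ with $V^{(1)}=\{1,\dots,n\}$, $V^{(2)}=\{n+1,\dots,2n\}$; its edge set is $E=E_{\mathrm{int}}\cup E_{\mathrm{cross}}$, where $E_{\mathrm{int}}$ consists of all pairs of distinct vertices in the same $V^{(k)}$ and $E_{\mathrm{cross}}=\{\{i,i+n\}:1\le i\le n\}$. For $\sigma\in\{-1,+1\}^V$, $H(\sigma)=-\sum_{\{i,j\}\in E_{\mathrm{int}}}\sigma_i\sigma_j-\epsilon\sum_{\{i,j\}\in E_{\mathrm{cross}}}\sigma_i\sigma_j-h\sum_{i\in V}\sigma_i$. $C(p_1,p_2,a)$ is the set of configurations with exactly $p_1$ vertices of spin $+1$ in $V^{(1)}$, exactly $p_2$ vertices of spin $+1$ in $V^{(2)}$, and exactly $a$ cross-edges both of whose endpoints have spin $+1$. $\mathcal C(p)$ is the set of configurations with exactly $p$ vertices of spin $+1$ in $V$.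 *)

theory Defs
  imports Complex_Main "HOL-Library.FuncSet"
begin

definition V1 :: "nat \<Rightarrow> nat set" where "V1 n = {1..n}"
definition V2 :: "nat \<Rightarrow> nat set" where "V2 n = {n+1..2*n}"
definition Vx :: "nat \<Rightarrow> nat set" where "Vx n = V1 n \<union> V2 n"

definition E_int :: "nat \<Rightarrow> nat set set" where
  "E_int n = {{i, j} | i j. i \<noteq> j \<and> ((i \<in> V1 n \<and> j \<in> V1 n) \<or> (i \<in> V2 n \<and> j \<in> V2 n))}"

definition E_cross :: "nat \<Rightarrow> nat set set" where
  "E_cross n = {{i, i + n} | i. i \<in> {1..n}}"

definition configs :: "nat \<Rightarrow> (nat \<Rightarrow> int) set" where
  "configs n = Vx n \<rightarrow>\<^sub>E {-1, 1}"

definition Ham :: "nat \<Rightarrow> real \<Rightarrow> real \<Rightarrow> (nat \<Rightarrow> int) \<Rightarrow> real" where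
  "Ham n \<epsilon> h \<sigma> =
     - (\<Sum>e\<in>E_int n. real_of_int (\<Prod>i\<in>e. \<sigma> i))
     - \<epsilon> * (\<Sum>e\<in>E_cross n. real_of_int (\<Prod>i\<in>e. \<sigma> i))
     - h * (\<Sum>i\<in>Vx n. real_of_int (\<sigma> i))"

definition Cfg3 :: "nat \<Rightarrow> nat \<Rightarrow> nat \<Rightarrow> nat \<Rightarrow> (nat \<Rightarrow> int) set" where
  "Cfg3 n p1 p2 a = {\<sigma> \<in> configs n.
      card {i \<in> V1 n. \<sigma> i = 1} = p1 \<and> card {i \<in> V2 n. \<sigma> i = 1} = p2 \<and>
      card {e \<in> E_cross n. \<forall>i\<in>e. \<sigma> i = 1} = a}"

definition Cfg :: "nat \<Rightarrow> nat \<Rightarrow> (nat \<Rightarrow> int) set" where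
  "Cfg n p = {\<sigma> \<in> configs n. card {i \<in> Vx n. \<sigma> i = 1} = p}"

end

theory Submission
  imports Defs
begin

text \<open>Counting identities show that the energy of a configuration depends only on the numbers
  \<open>x\<close>, \<open>y\<close> of up spins in \<open>V1\<close>, \<open>V2\<close> and the number \<open>a\<close> of cross edges with both ends up:
  \<open>H = n - (x + y - n)\<^sup>2 - (x - y)\<^sup>2 - \<epsilon> (4a - 2(x + y) + n) - 2h (x + y - n)\<close>.
  For fixed \<open>p = x + y\<close> its excess over the value at \<open>(p, 0, 0)\<close> is \<open>4 (xy - \<epsilon> a) \<ge> 0\<close>, because
  \<open>a \<le> min x y \<le> xy\<close> and \<open>\<epsilon> \<le> 1\<close>; the same argument for down spins bounds it below by the value
  at \<open>(n, p - n, p - n)\<close>. Each bound is attained when the corresponding counts are realizable,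
  and the energy is symmetric in \<open>x\<close> and \<open>y\<close>.\<close>

lemma sum_plus_minus_one:
  fixes \<sigma> :: "'a \<Rightarrow> int"
  assumes "finite A" "\<forall>i\<in>A. \<sigma> i \<in> {-1, 1}"
  shows "(\<Sum>i\<in>A. \<sigma> i) = 2 * int (card {i\<in>A. \<sigma> i = 1}) - int (card A)"
  using assms
proof (induction A rule: finite_induct)
  case (insert x A)
  have "{i\<in>insert x A. \<sigma> i = 1}
      = (if \<sigma> x = 1 then insert x {i\<in>A. \<sigma> i = 1} else {i\<in>A. \<sigma> i = 1})"
    by auto
  then show ?case
    using insert by auto
qed simp

definition doubletons :: "'a set \<Rightarrow> 'a set set" where
  "doubletons A = {{i, j} | i j. i \<noteq> j \<and> i \<in> A \<and> j \<in> A}"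

lemma doubletons_insert:
  "x \<notin> A \<Longrightarrow> doubletons (insert x A) = doubletons A \<union> (\<lambda>j. {x, j}) ` A"
  unfolding doubletons_def by (auto simp: insert_commute)

lemma doubletons_subset_Pow: "doubletons A \<subseteq> Pow A"
  unfolding doubletons_def by auto

lemma finite_doubletons: "finite A \<Longrightarrow> finite (doubletons A)"
  by (meson doubletons_subset_Pow finite_Pow_iff finite_subset)

lemma sum_doubletons_prod:
  fixes \<sigma> :: "'a \<Rightarrow> int"
  assumes "finite A" "\<forall>i\<in>A. \<sigma> i \<in> {-1, 1}"
  shows "2 * (\<Sum>e\<in>doubletons A. \<Prod>i\<in>e. \<sigma> i) = (\<Sum>i\<in>A. \<sigma> i)\<^sup>2 - int (card A)"
  using assms
proof (induction A rule: finite_induct)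
  case empty
  then show ?case by (simp add: doubletons_def)
next
  case (insert x A)
  have disjoint: "doubletons A \<inter> (\<lambda>j. {x, j}) ` A = {}"
    using insert.hyps(2) doubletons_subset_Pow by fastforce
  have inj: "inj_on (\<lambda>j. {x, j}) A"
    using insert.hyps(2) by (auto simp: inj_on_def doubleton_eq_iff)
  have "(\<Sum>e\<in>doubletons (insert x A). \<Prod>i\<in>e. \<sigma> i)
      = (\<Sum>e\<in>doubletons A. \<Prod>i\<in>e. \<sigma> i) + (\<Sum>j\<in>A. \<Prod>i\<in>{x, j}. \<sigma> i)"
    unfolding doubletons_insert[OF insert.hyps(2)]
    using insert.hyps finite_doubletons disjoint
    by (subst sum.union_disjoint) (auto simp: sum.reindex[OF inj])
  also have "(\<Sum>j\<in>A. \<Prod>i\<in>{x, j}. \<sigma> i) = \<sigma> x * (\<Sum>j\<in>A. \<sigma> j)"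
    unfolding sum_distrib_left using insert.hyps(2)
    by (intro sum.cong refl) (subst prod.insert; auto)
  finally show ?case
    using insert by (auto simp: power2_eq_square algebra_simps)
qed

definition ups_V1 :: "nat \<Rightarrow> (nat \<Rightarrow> int) \<Rightarrow> nat" where
  "ups_V1 n \<sigma> = card {i\<in>{1..n}. \<sigma> i = 1}"

definition ups_V2 :: "nat \<Rightarrow> (nat \<Rightarrow> int) \<Rightarrow> nat" where
  "ups_V2 n \<sigma> = card {i\<in>{1..n}. \<sigma> (i + n) = 1}"

definition ups_cross :: "nat \<Rightarrow> (nat \<Rightarrow> int) \<Rightarrow> nat" where
  "ups_cross n \<sigma> = card {i\<in>{1..n}. \<sigma> i = 1 \<and> \<sigma> (i + n) = 1}"

lemma V2_eq_image: "V2 n = (\<lambda>i. i + n) ` {1..n}"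
  unfolding V2_def by (auto simp: image_iff intro!: bexI[where x = "_ - n"])

lemma V1_V2_disjoint: "V1 n \<inter> V2 n = {}"
  unfolding V1_def V2_def by auto

lemma finite_V1 [simp]: "finite (V1 n)" and finite_V2 [simp]: "finite (V2 n)"
  by (simp_all add: V1_def V2_def)

lemma card_V1 [simp]: "card (V1 n) = n" and card_V2 [simp]: "card (V2 n) = n"
  by (simp_all add: V1_def V2_def)

lemma E_int_eq: "E_int n = doubletons (V1 n) \<union> doubletons (V2 n)"
  unfolding E_int_def doubletons_def by blast

lemma E_cross_eq: "E_cross n = (\<lambda>i. {i, i + n}) ` {1..n}"
  unfolding E_cross_def by blast

lemma inj_on_cross_edge: "inj_on (\<lambda>i. {i, i + n :: nat}) A"
  by (rule inj_onI) (auto simp: doubleton_eq_iff)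

lemma card_ups_V1: "card {i\<in>V1 n. \<sigma> i = 1} = ups_V1 n \<sigma>"
  unfolding V1_def ups_V1_def ..

lemma card_ups_V2: "card {i\<in>V2 n. \<sigma> i = 1} = ups_V2 n \<sigma>"
proof -
  have "{i\<in>V2 n. \<sigma> i = 1} = (\<lambda>i. i + n) ` {i\<in>{1..n}. \<sigma> (i + n) = 1}"
    unfolding V2_eq_image by blast
  then show ?thesis
    unfolding ups_V2_def by (simp add: card_image)
qed

lemma card_ups_Vx: "card {i\<in>Vx n. \<sigma> i = 1} = ups_V1 n \<sigma> + ups_V2 n \<sigma>"
proof -
  have "{i\<in>Vx n. \<sigma> i = 1} = {i\<in>V1 n. \<sigma> i = 1} \<union> {i\<in>V2 n. \<sigma> i = 1}"
    unfolding Vx_def by auto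
  then show ?thesis
    using V1_V2_disjoint[of n]
    by (simp add: card_Un_disjoint disjoint_iff card_ups_V1 card_ups_V2)
qed

lemma card_ups_cross: "card {e\<in>E_cross n. \<forall>i\<in>e. \<sigma> i = 1} = ups_cross n \<sigma>"
proof -
  have "{e\<in>E_cross n. \<forall>i\<in>e. \<sigma> i = 1}
      = (\<lambda>i. {i, i + n}) ` {i\<in>{1..n}. \<sigma> i = 1 \<and> \<sigma> (i + n) = 1}"
    unfolding E_cross_eq by auto
  then show ?thesis
    unfolding ups_cross_def by (simp add: card_image inj_on_cross_edge)
qed

lemma Cfg3_iff:
  "\<sigma> \<in> Cfg3 n p1 p2 a \<longleftrightarrow>
     \<sigma> \<in> configs n \<and> ups_V1 n \<sigma> = p1 \<and> ups_V2 n \<sigma> = p2 \<and> ups_cross n \<sigma> = a"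
  unfolding Cfg3_def by (simp add: card_ups_V1 card_ups_V2 card_ups_cross)

lemma Cfg_iff: "\<sigma> \<in> Cfg n p \<longleftrightarrow> \<sigma> \<in> configs n \<and> ups_V1 n \<sigma> + ups_V2 n \<sigma> = p"
  unfolding Cfg_def by (simp add: card_ups_Vx)

lemma Cfg3_subset_Cfg: "p1 + p2 = p \<Longrightarrow> Cfg3 n p1 p2 a \<subseteq> Cfg n p"
  by (auto simp: Cfg3_iff Cfg_iff)

lemma finite_Cfg: "finite (Cfg n p)"
proof -
  have "finite (configs n)"
    unfolding configs_def Vx_def by (simp add: finite_PiE)
  then show ?thesis
    unfolding Cfg_def by simp
qed

lemma ups_bounds:
  shows "ups_V1 n \<sigma> \<le> n" "ups_V2 n \<sigma> \<le> n"
    and "ups_cross n \<sigma> \<le> ups_V1 n \<sigma>" "ups_cross n \<sigma> \<le> ups_V2 n \<sigma>"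
    and "ups_V1 n \<sigma> + ups_V2 n \<sigma> \<le> n + ups_cross n \<sigma>"
proof -
  let ?U1 = "{i\<in>{1..n}. \<sigma> i = 1}" and ?U2 = "{i\<in>{1..n}. \<sigma> (i + n) = 1}"
  show "ups_V1 n \<sigma> \<le> n" "ups_V2 n \<sigma> \<le> n"
    unfolding ups_V1_def ups_V2_def by (auto intro: card_mono[of "{1..n}", simplified])
  show "ups_cross n \<sigma> \<le> ups_V1 n \<sigma>" "ups_cross n \<sigma> \<le> ups_V2 n \<sigma>"
    unfolding ups_cross_def ups_V1_def ups_V2_def by (auto intro: card_mono)
  have "card (?U1 \<union> ?U2) + card (?U1 \<inter> ?U2) = ups_V1 n \<sigma> + ups_V2 n \<sigma>"
    unfolding ups_V1_def ups_V2_def by (rule card_Un_Int[symmetric]) auto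
  moreover have "card (?U1 \<inter> ?U2) = ups_cross n \<sigma>"
    unfolding ups_cross_def by (rule arg_cong[where f = card]) auto
  moreover have "card (?U1 \<union> ?U2) \<le> n"
    by (rule order_trans[OF card_mono[of "{1..n}"]]) auto
  ultimately show "ups_V1 n \<sigma> + ups_V2 n \<sigma> \<le> n + ups_cross n \<sigma>"
    by linarith
qed

lemma configs_values: "\<sigma> \<in> configs n \<Longrightarrow> i \<in> Vx n \<Longrightarrow> \<sigma> i \<in> {-1, 1}"
  unfolding configs_def by (auto simp: PiE_def Pi_def)

lemma sum_V1_spin:
  assumes "\<sigma> \<in> configs n"
  shows "(\<Sum>i\<in>V1 n. \<sigma> i) = 2 * int (ups_V1 n \<sigma>) - int n"
  using sum_plus_minus_one[of "V1 n" \<sigma>] configs_values[OF assms]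
  by (simp add: Vx_def card_ups_V1)

lemma sum_V2_spin:
  assumes "\<sigma> \<in> configs n"
  shows "(\<Sum>i\<in>V2 n. \<sigma> i) = 2 * int (ups_V2 n \<sigma>) - int n"
  using sum_plus_minus_one[of "V2 n" \<sigma>] configs_values[OF assms]
  by (simp add: Vx_def card_ups_V2)

lemma sum_Vx_spin:
  assumes "\<sigma> \<in> configs n"
  shows "(\<Sum>i\<in>Vx n. \<sigma> i) = 2 * int (ups_V1 n \<sigma>) + 2 * int (ups_V2 n \<sigma>) - 2 * int n"
  unfolding Vx_def using V1_V2_disjoint[of n]
  by (simp add: sum.union_disjoint sum_V1_spin[OF assms] sum_V2_spin[OF assms])

lemma sum_E_int_spin:
  assumes "\<sigma> \<in> configs n"
  shows "2 * (\<Sum>e\<in>E_int n. \<Prod>i\<in>e. \<sigma> i)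
    = (2 * int (ups_V1 n \<sigma>) - int n)\<^sup>2 + (2 * int (ups_V2 n \<sigma>) - int n)\<^sup>2 - 2 * int n"
proof -
  have "doubletons (V1 n) \<inter> doubletons (V2 n) = {}"
    using V1_V2_disjoint[of n] unfolding doubletons_def by (auto simp: doubleton_eq_iff)
  then have "(\<Sum>e\<in>E_int n. \<Prod>i\<in>e. \<sigma> i)
      = (\<Sum>e\<in>doubletons (V1 n). \<Prod>i\<in>e. \<sigma> i) + (\<Sum>e\<in>doubletons (V2 n). \<Prod>i\<in>e. \<sigma> i)"
    unfolding E_int_eq by (simp add: sum.union_disjoint finite_doubletons)
  moreover have "2 * (\<Sum>e\<in>doubletons (V1 n). \<Prod>i\<in>e. \<sigma> i) = (2 * int (ups_V1 n \<sigma>) - int n)\<^sup>2 - int n"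
    using sum_doubletons_prod[of "V1 n" \<sigma>] configs_values[OF assms] sum_V1_spin[OF assms]
    by (simp add: Vx_def)
  moreover have "2 * (\<Sum>e\<in>doubletons (V2 n). \<Prod>i\<in>e. \<sigma> i) = (2 * int (ups_V2 n \<sigma>) - int n)\<^sup>2 - int n"
    using sum_doubletons_prod[of "V2 n" \<sigma>] configs_values[OF assms] sum_V2_spin[OF assms]
    by (simp add: Vx_def)
  ultimately show ?thesis
    by simp
qed

lemma spin_product_eq:
  fixes x y :: int
  assumes "x \<in> {-1, 1}" "y \<in> {-1, 1}"
  shows "x * y = 4 * of_bool (x = 1 \<and> y = 1) - 2 * of_bool (x = 1) - 2 * of_bool (y = 1) + 1"
  using assms by auto

lemma sum_E_cross_spin:
  assumes "\<sigma> \<in> configs n"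
  shows "(\<Sum>e\<in>E_cross n. \<Prod>i\<in>e. \<sigma> i)
    = 4 * int (ups_cross n \<sigma>) - 2 * int (ups_V1 n \<sigma>) - 2 * int (ups_V2 n \<sigma>) + int n"
proof -
  have "(\<Sum>e\<in>E_cross n. \<Prod>i\<in>e. \<sigma> i) = (\<Sum>i\<in>{1..n}. \<sigma> i * \<sigma> (i + n))"
    unfolding E_cross_eq by (simp add: sum.reindex inj_on_cross_edge)
  also have "\<dots> = (\<Sum>i\<in>{1..n}. 4 * of_bool (\<sigma> i = 1 \<and> \<sigma> (i + n) = 1)
      - 2 * of_bool (\<sigma> i = 1) - 2 * of_bool (\<sigma> (i + n) = 1) + 1)"
    using configs_values[OF assms] by (intro sum.cong refl spin_product_eq) (auto simp: Vx_def V1_def V2_def)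
  also have "\<dots> = 4 * int (ups_cross n \<sigma>) - 2 * int (ups_V1 n \<sigma>) - 2 * int (ups_V2 n \<sigma>) + int n"
    by (simp add: sum.distrib sum_subtractf ups_V1_def ups_V2_def ups_cross_def
        flip: sum_distrib_left) (simp add: Int_def)
  finally show ?thesis .
qed

definition energy :: "nat \<Rightarrow> real \<Rightarrow> real \<Rightarrow> real \<Rightarrow> real \<Rightarrow> real \<Rightarrow> real" where
  "energy n \<epsilon> h x y a = real n - (x + y - real n)\<^sup>2 - (x - y)\<^sup>2
     - \<epsilon> * (4 * a - 2 * (x + y) + real n) - 2 * h * (x + y - real n)"

lemma energy_swap: "energy n \<epsilon> h x y a = energy n \<epsilon> h y x a"
  unfolding energy_def by (simp add: power2_commute algebra_simps)

lemma Ham_eq_energy: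
  assumes "\<sigma> \<in> configs n"
  shows "Ham n \<epsilon> h \<sigma> = energy n \<epsilon> h (ups_V1 n \<sigma>) (ups_V2 n \<sigma>) (ups_cross n \<sigma>)"
proof -
  let ?x = "real (ups_V1 n \<sigma>)" and ?y = "real (ups_V2 n \<sigma>)" and ?a = "real (ups_cross n \<sigma>)"
  have "2 * real_of_int (\<Sum>e\<in>E_int n. \<Prod>i\<in>e. \<sigma> i) = (2 * ?x - n)\<^sup>2 + (2 * ?y - n)\<^sup>2 - 2 * n"
    using arg_cong[OF sum_E_int_spin[OF assms], of real_of_int] by simp
  then show ?thesis
    unfolding Ham_def energy_def of_int_sum[symmetric] sum_E_cross_spin[OF assms] sum_Vx_spin[OF assms]
    by (simp add: power2_eq_square algebra_simps)
qed

lemma Ham_Cfg3: "\<sigma> \<in> Cfg3 n p1 p2 a \<Longrightarrow> Ham n \<epsilon> h \<sigma> = energy n \<epsilon> h p1 p2 a"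
  by (simp add: Cfg3_iff Ham_eq_energy)

lemma energy_sub_split:
  "energy n \<epsilon> h x y a - energy n \<epsilon> h (x + y) 0 0 = 4 * (x * y - \<epsilon> * a)"
  unfolding energy_def by (simp add: power2_eq_square algebra_simps)

lemma energy_sub_full:
  "energy n \<epsilon> h x y a - energy n \<epsilon> h n (x + y - n) (x + y - n)
     = 4 * ((n - x) * (n - y) - \<epsilon> * (a + n - x - y))"
  unfolding energy_def by (simp add: power2_eq_square algebra_simps)

lemma scaled_le_mult_nat:
  fixes a x y :: nat and \<epsilon> :: real
  assumes "a \<le> x" "a \<le> y" "\<epsilon> \<le> 1"
  shows "\<epsilon> * a \<le> real x * real y"
proof -
  have "a \<le> x * y"
    using assms(1,2) by (cases y) (auto intro: le_trans[OF _ mult_le_mono1])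
  then have "real a \<le> real x * real y"
    by (metis of_nat_le_iff of_nat_mult)
  moreover have "\<epsilon> * a \<le> a"
    using mult_right_mono[OF assms(3), of "real a"] by simp
  ultimately show ?thesis
    by linarith
qed

lemma Ham_ge_split:
  assumes "\<sigma> \<in> Cfg n p" "\<epsilon> \<le> 1"
  shows "energy n \<epsilon> h p 0 0 \<le> Ham n \<epsilon> h \<sigma>"
  using assms ups_bounds[of n \<sigma>] energy_sub_split[of n \<epsilon> h "ups_V1 n \<sigma>" "ups_V2 n \<sigma>" "ups_cross n \<sigma>"]
    scaled_le_mult_nat[of "ups_cross n \<sigma>" "ups_V1 n \<sigma>" "ups_V2 n \<sigma>" \<epsilon>]
  by (auto simp: Cfg_iff Ham_eq_energy)

text \<open>The spin-flip image of the previous bound: the counts of down spins in \<open>V1\<close>, \<open>V2\<close> and of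
  cross edges with both ends down are \<open>n - x\<close>, \<open>n - y\<close> and \<open>a + n - x - y\<close>.\<close>
lemma Ham_ge_full:
  assumes "\<sigma> \<in> Cfg n p" "\<epsilon> \<le> 1"
  shows "energy n \<epsilon> h n (real p - n) (real p - n) \<le> Ham n \<epsilon> h \<sigma>"
proof -
  obtain x y a where counts: "ups_V1 n \<sigma> = x" "ups_V2 n \<sigma> = y" "ups_cross n \<sigma> = a"
    by blast
  then have bounds: "x \<le> n" "y \<le> n" "a \<le> x" "a \<le> y" "x + y \<le> n + a"
    using ups_bounds[of n \<sigma>] by auto
  have "\<epsilon> * real (a + n - x - y) \<le> real (n - x) * real (n - y)"
    using bounds assms(2) by (intro scaled_le_mult_nat) auto
  then have "\<epsilon> * (a + real n - x - y) \<le> (real n - x) * (real n - y)"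
    using bounds by (simp add: of_nat_diff algebra_simps)
  moreover have "real p = x + y"
    using assms(1) counts by (auto simp: Cfg_iff)
  ultimately show ?thesis
    using assms(1) counts energy_sub_full[of n \<epsilon> h x y a]
    by (auto simp: Cfg_iff Ham_eq_energy)
qed

definition spin_config :: "nat \<Rightarrow> nat set \<Rightarrow> nat \<Rightarrow> int" where
  "spin_config n S = restrict (\<lambda>i. if i \<in> S then 1 else -1) (Vx n)"

lemma Cfg3_nonempty:
  assumes "a \<le> p1" "a \<le> p2" "p1 + p2 \<le> n + a"
  shows "Cfg3 n p1 p2 a \<noteq> {}"
proof -
  \<comment> \<open>the up spins of \<open>V2\<close> sit opposite \<open>{p1 - a + 1..p1 - a + p2}\<close>, which meets \<open>{1..p1}\<close> in \<open>a\<close> points\<close>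
  define S where "S = {1..p1} \<union> {n + p1 - a + 1..n + p1 - a + p2}"
  let ?\<sigma> = "spin_config n S"
  have "ups_V1 n ?\<sigma> = card {1..p1}"
    unfolding ups_V1_def spin_config_def S_def using assms
    by (intro arg_cong[where f = card]) (auto simp: Vx_def V1_def)
  moreover have "ups_V2 n ?\<sigma> = card {p1 - a + 1..p1 - a + p2}"
    unfolding ups_V2_def spin_config_def S_def using assms
    by (intro arg_cong[where f = card]) (auto simp: Vx_def V2_def)
  moreover have "ups_cross n ?\<sigma> = card {p1 - a + 1..p1}"
    unfolding ups_cross_def spin_config_def S_def using assms
    by (intro arg_cong[where f = card]) (auto simp: Vx_def V1_def V2_def)
  moreover have "?\<sigma> \<in> configs n"
    unfolding spin_config_def configs_def by auto
  ultimately have "?\<sigma> \<in> Cfg3 n p1 p2 a"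
    using assms by (simp add: Cfg3_iff)
  then show ?thesis
    by blast
qed

lemma Min_Ham_Cfg_eqI:
  assumes "Cfg3 n p1 p2 a \<noteq> {}" "p1 + p2 = p"
    and "\<And>\<sigma>. \<sigma> \<in> Cfg n p \<Longrightarrow> energy n \<epsilon> h p1 p2 a \<le> Ham n \<epsilon> h \<sigma>"
  shows "Min (Ham n \<epsilon> h ` Cfg n p) = energy n \<epsilon> h p1 p2 a"
proof -
  obtain \<sigma> where "\<sigma> \<in> Cfg3 n p1 p2 a"
    using assms(1) by blast
  then have "\<sigma> \<in> Cfg n p" "Ham n \<epsilon> h \<sigma> = energy n \<epsilon> h p1 p2 a"
    using Cfg3_subset_Cfg[OF assms(2)] Ham_Cfg3 by auto
  then show ?thesis
    using assms(3) finite_Cfg by (intro Min_eqI) force+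
qed

theorem proposition5p4:
  fixes n p :: nat and \<epsilon> h :: real
  assumes "n \<ge> 2" and "-1 \<le> \<epsilon>" and "\<epsilon> \<le> 1" and "0 \<le> h" and "h \<le> 1"
    and "p \<le> 2 * n"
  shows
    "(p \<le> n \<longrightarrow>
        Min (Ham n \<epsilon> h ` Cfg n p)
          = real n - (real p - real n)^2 - (real p)^2 - \<epsilon> * (real n - 2 * real p)
            - 2 * h * (real p - real n)
        \<and> Cfg3 n p 0 0 \<noteq> {} \<and> Cfg3 n 0 p 0 \<noteq> {}
        \<and> (\<forall>\<sigma> \<in> Cfg3 n p 0 0. Ham n \<epsilon> h \<sigma> = Min (Ham n \<epsilon> h ` Cfg n p))
        \<and> (\<forall>\<sigma> \<in> Cfg3 n 0 p 0. Ham n \<epsilon> h \<sigma> = Min (Ham n \<epsilon> h ` Cfg n p)))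
     \<and> (n \<le> p \<longrightarrow>
        Min (Ham n \<epsilon> h ` Cfg n p)
          = real n - (2 * real n - real p)^2 - (real p - real n)^2 - \<epsilon> * (2 * real p - 3 * real n)
            - 2 * h * (real p - real n)
        \<and> Cfg3 n n (p - n) (p - n) \<noteq> {} \<and> Cfg3 n (p - n) n (p - n) \<noteq> {}
        \<and> (\<forall>\<sigma> \<in> Cfg3 n n (p - n) (p - n). Ham n \<epsilon> h \<sigma> = Min (Ham n \<epsilon> h ` Cfg n p))
        \<and> (\<forall>\<sigma> \<in> Cfg3 n (p - n) n (p - n). Ham n \<epsilon> h \<sigma> = Min (Ham n \<epsilon> h ` Cfg n p)))"
proof (intro conjI impI)
  assume "p \<le> n"
  have min: "Min (Ham n \<epsilon> h ` Cfg n p) = energy n \<epsilon> h p 0 0"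
    using Min_Ham_Cfg_eqI[of n p 0 0 p \<epsilon> h] Cfg3_nonempty[of 0 p 0 n] Ham_ge_split assms(3) \<open>p \<le> n\<close>
    by simp
  then show "Min (Ham n \<epsilon> h ` Cfg n p) = real n - (real p - real n)\<^sup>2 - (real p)\<^sup>2
      - \<epsilon> * (real n - 2 * real p) - 2 * h * (real p - real n)"
    by (simp add: energy_def algebra_simps)
  show "Cfg3 n p 0 0 \<noteq> {}" "Cfg3 n 0 p 0 \<noteq> {}"
    using Cfg3_nonempty[of 0 p 0 n] Cfg3_nonempty[of 0 0 p n] \<open>p \<le> n\<close> by auto
  show "\<forall>\<sigma> \<in> Cfg3 n p 0 0. Ham n \<epsilon> h \<sigma> = Min (Ham n \<epsilon> h ` Cfg n p)"
    "\<forall>\<sigma> \<in> Cfg3 n 0 p 0. Ham n \<epsilon> h \<sigma> = Min (Ham n \<epsilon> h ` Cfg n p)"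
    using min Ham_Cfg3 energy_swap by auto
next
  assume "n \<le> p"
  have min: "Min (Ham n \<epsilon> h ` Cfg n p) = energy n \<epsilon> h n (p - n) (p - n)"
    using Min_Ham_Cfg_eqI[of n n "p - n" "p - n" p \<epsilon> h] Cfg3_nonempty[of "p - n" n "p - n" n]
      Ham_ge_full assms(3,6) \<open>n \<le> p\<close>
    by (simp add: of_nat_diff)
  then show "Min (Ham n \<epsilon> h ` Cfg n p) = real n - (2 * real n - real p)\<^sup>2 - (real p - real n)\<^sup>2
      - \<epsilon> * (2 * real p - 3 * real n) - 2 * h * (real p - real n)"
    using \<open>n \<le> p\<close> by (simp add: energy_def of_nat_diff algebra_simps)
  show "Cfg3 n n (p - n) (p - n) \<noteq> {}" "Cfg3 n (p - n) n (p - n) \<noteq> {}"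
    using Cfg3_nonempty[of "p - n" n "p - n" n] Cfg3_nonempty[of "p - n" "p - n" n n]
      assms(6) \<open>n \<le> p\<close>
    by auto
  show "\<forall>\<sigma> \<in> Cfg3 n n (p - n) (p - n). Ham n \<epsilon> h \<sigma> = Min (Ham n \<epsilon> h ` Cfg n p)"
    "\<forall>\<sigma> \<in> Cfg3 n (p - n) n (p - n). Ham n \<epsilon> h \<sigma> = Min (Ham n \<epsilon> h ` Cfg n p)"
    using min Ham_Cfg3 energy_swap by auto
qed

end
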